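(* With notation as in the context (type $E_6$ over $\mathbb{Z}/3$), let $s\in\{1,3,4,5,6\}$ and let $x\ne y$ be elements of $\Gamma_s^+$. Then $(x|y)=0$ if and only if $x$ and $y$ agree in exactly one of their five coordinates.
   Context: Let $V=(\mathbb{Z}/3)^5$ with the standard symmetric form $\sum_i x_iy_i$. Let $\Delta$ be the root system of type $E_6$ with simple roots $\alpha_1,\dots,\alpha_6$, $\langle\alpha_i,\alpha_i\rangle=2$, $\langle\alpha_i,\alpha_j\rangle=-1$ if $\{i,j\}\in\{\{1,3\},\{3,4\},\{4,5\},\{5,6\},\{2,4\}\}$, $0$ otherwise; $\Lambda=\bigoplus\mathbb{Z}\alpha_i$, $\Delta^+$ the positive roots. Let $f:\Lambda\to V$ be the group homomorphism with $f(\alpha_1)=(1,2,0,0,0)$, $f(\alpha_2)=(0,0,0,1,2)$, $f(\alpha_3)=(0,1,2,0,0)$, $f(\alpha_4)=(0,0,1,2,0)$, $f(\alpha_5)=(0,0,0,1,1)$, $f(\alpha_6)=(1,1,1,1,1)$. For $\beta=\sum\beta^i\alpha_i\in\Delta^+$ let $m(\beta)=\max\{i:\beta^i\ne0\}$; set $\Delta_1^+=\{\alpha_1\}$, $\Delta_3^+=\{\beta: m(\beta)\in\{2,3\}\}$, $\Delta_s^+=\{\beta: m(\beta)=s\}$ for $s=4,5,6$, and $\Gamma_s^+=f(\Delta_s^+)$. *)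

theory Defs
  imports Main
begin

(* Elements of the root lattice Lambda = (+) Z alpha_i are represented by their
   coefficient functions c :: nat => int, with c i the coefficient of alpha_i
   (i = 1..6) and c i = 0 for i outside {1..6}. *)

definition lattice :: "(nat \<Rightarrow> int) set" where
  "lattice = {c. \<forall>i. i \<notin> {1..6} \<longrightarrow> c i = 0}"

(* Gram matrix of the simple roots of E6 (Bourbaki labelling as in the context) *)
definition gram :: "nat \<Rightarrow> nat \<Rightarrow> int" where
  "gram i j = (if i = j then 2
     else if {i,j} \<in> {{1,3},{3,4},{4,5},{5,6},{2,4}} then -1 else 0)"

definition lform :: "(nat \<Rightarrow> int) \<Rightarrow> (nat \<Rightarrow> int) \<Rightarrow> int" where
  "lform b c = (\<Sum>i=1..6. \<Sum>j=1..6. b i * c j * gram i j)"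

definition alpha :: "nat \<Rightarrow> nat \<Rightarrow> int" where
  "alpha i = (\<lambda>j. if j = i then 1 else 0)"

definition E6_roots :: "(nat \<Rightarrow> int) set" where
  "E6_roots = {c \<in> lattice. lform c c = 2}"

definition E6_pos_roots :: "(nat \<Rightarrow> int) set" where
  "E6_pos_roots = {c \<in> E6_roots. \<forall>i. c i \<ge> 0}"

definition mroot :: "(nat \<Rightarrow> int) \<Rightarrow> nat" where
  "mroot b = Max {i \<in> {1..6}. b i \<noteq> 0}"

definition Delta_s :: "nat \<Rightarrow> (nat \<Rightarrow> int) set" where
  "Delta_s s = (if s = 1 then {alpha 1}
     else if s = 3 then {b \<in> E6_pos_roots. mroot b \<in> {2,3}}
     else {b \<in> E6_pos_roots. mroot b = s})"

(* V = (Z/3)^5 represented as int lists of length 5 with entries in {0,1,2};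
   coordinates indexed 0..4 *)
definition fimg :: "nat \<Rightarrow> int list" where
  "fimg i = (if i = 1 then [1,2,0,0,0]
     else if i = 2 then [0,0,0,1,2]
     else if i = 3 then [0,1,2,0,0]
     else if i = 4 then [0,0,1,2,0]
     else if i = 5 then [0,0,0,1,1]
     else if i = 6 then [1,1,1,1,1] else [0,0,0,0,0])"

definition fhom :: "(nat \<Rightarrow> int) \<Rightarrow> int list" where
  "fhom b = map (\<lambda>k. (\<Sum>i=1..6. b i * fimg i ! k) mod 3) [0..<5]"

definition vform :: "int list \<Rightarrow> int list \<Rightarrow> int" where
  "vform x y = (\<Sum>k<5. x ! k * y ! k) mod 3"

definition Gamma_s :: "nat \<Rightarrow> int list set" where
  "Gamma_s s = fhom ` Delta_s s"

end

theory Submission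
  imports Defs
begin

(* Completing squares in the E6 Cartan form bounds every coefficient of a root by the
   corresponding coefficient of the highest root (1,2,2,3,2,1), so the 36 positive roots lie
   in a finite box and can be enumerated.  Their images under f give Gamma_3^+, ..., Gamma_6^+
   explicitly (Gamma_1^+ is a single point), and the claim is checked on all pairs.  For
   instance Gamma_6^+ consists of the vectors in {1,2}^5 with an even number of entries 2: two
   of them differ in an even number of places, and with a agreements (x|y) = 2a - 5, which
   vanishes mod 3 exactly when a = 1. *)

lemma lform_self:
  "lform b b = 2 * (b 1)\<^sup>2 + 2 * (b 2)\<^sup>2 + 2 * (b 3)\<^sup>2 + 2 * (b 4)\<^sup>2 + 2 * (b 5)\<^sup>2
     + 2 * (b 6)\<^sup>2 - 2 * b 1 * b 3 - 2 * b 3 * b 4 - 2 * b 4 * b 5 - 2 * b 5 * b 6 - 2 * b 2 * b 4"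
proof -
  have "{1..6::nat} = {1, 2, 3, 4, 5, 6}" by auto
  then show ?thesis
    by (simp add: lform_def gram_def doubleton_eq_iff power2_eq_square algebra_simps)
qed

lemma abs_le_of_square_less:
  fixes a B :: int
  assumes "a\<^sup>2 < (B + 1)\<^sup>2" and "0 \<le> B"
  shows "\<bar>a\<bar> \<le> B"
  using assms abs_le_square_iff[of "B + 1" a] by linarith

lemma E6_root_coeff_bounds:
  assumes "lform b b = 2"
  shows "\<bar>b 1\<bar> \<le> 1" and "\<bar>b 2\<bar> \<le> 2" and "\<bar>b 3\<bar> \<le> 2"
    and "\<bar>b 4\<bar> \<le> 3" and "\<bar>b 5\<bar> \<le> 2" and "\<bar>b 6\<bar> \<le> 1"
proof -
  have "4 * lform b b = 2 * (2 * b 2 - b 4)\<^sup>2 + 2 * (2 * b 3 - b 4 - b 1)\<^sup>2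
      + (2 * b 4 - 2 * b 5 - b 1)\<^sup>2 + (2 * b 5 - 2 * b 6 - b 1)\<^sup>2 + (2 * b 6 - b 1)\<^sup>2
      + 3 * (b 1)\<^sup>2"
    by (simp add: lform_self power2_eq_square algebra_simps)
  then have "3 * (b 1)\<^sup>2 \<le> 8" using assms by (smt (verit) zero_le_power2)
  then show "\<bar>b 1\<bar> \<le> 1" by (intro abs_le_of_square_less) auto
  have "60 * lform b b = 30 * (2 * b 1 - b 3)\<^sup>2 + 10 * (3 * b 3 - 2 * b 4)\<^sup>2
      + 5 * (4 * b 4 - 3 * b 5 - 3 * b 2)\<^sup>2 + 3 * (5 * b 5 - 4 * b 6 - 3 * b 2)\<^sup>2
      + 18 * (2 * b 6 - b 2)\<^sup>2 + 30 * (b 2)\<^sup>2"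
    by (simp add: lform_self power2_eq_square algebra_simps)
  then have "30 * (b 2)\<^sup>2 \<le> 120" using assms by (smt (verit) zero_le_power2)
  then show "\<bar>b 2\<bar> \<le> 2" by (intro abs_le_of_square_less) auto
  have "60 * lform b b = 30 * (2 * b 1 - b 3)\<^sup>2 + 30 * (2 * b 2 - b 4)\<^sup>2
      + 10 * (3 * b 4 - 2 * b 5 - 2 * b 3)\<^sup>2 + 5 * (4 * b 5 - 3 * b 6 - 2 * b 3)\<^sup>2
      + 3 * (5 * b 6 - 2 * b 3)\<^sup>2 + 18 * (b 3)\<^sup>2"
    by (simp add: lform_self power2_eq_square algebra_simps)
  then have "18 * (b 3)\<^sup>2 \<le> 120" using assms by (smt (verit) zero_le_power2)
  then show "\<bar>b 3\<bar> \<le> 2" by (intro abs_le_of_square_less) auto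
  have "6 * lform b b = 3 * (2 * b 1 - b 3)\<^sup>2 + 3 * (2 * b 2 - b 4)\<^sup>2 + (3 * b 3 - 2 * b 4)\<^sup>2
      + 3 * (2 * b 5 - b 6 - b 4)\<^sup>2 + (3 * b 6 - b 4)\<^sup>2 + (b 4)\<^sup>2"
    by (simp add: lform_self power2_eq_square algebra_simps)
  then have "(b 4)\<^sup>2 \<le> 12" using assms by (smt (verit) zero_le_power2)
  then show "\<bar>b 4\<bar> \<le> 3" by (intro abs_le_of_square_less) auto
  have "30 * lform b b = 15 * (2 * b 1 - b 3)\<^sup>2 + 15 * (2 * b 2 - b 4)\<^sup>2
      + 5 * (3 * b 3 - 2 * b 4)\<^sup>2 + (5 * b 4 - 6 * b 5)\<^sup>2 + 15 * (2 * b 6 - b 5)\<^sup>2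
      + 9 * (b 5)\<^sup>2"
    by (simp add: lform_self power2_eq_square algebra_simps)
  then have "9 * (b 5)\<^sup>2 \<le> 60" using assms by (smt (verit) zero_le_power2)
  then show "\<bar>b 5\<bar> \<le> 2" by (intro abs_le_of_square_less) auto
  have "60 * lform b b = 30 * (2 * b 1 - b 3)\<^sup>2 + 30 * (2 * b 2 - b 4)\<^sup>2
      + 10 * (3 * b 3 - 2 * b 4)\<^sup>2 + 2 * (5 * b 4 - 6 * b 5)\<^sup>2 + 3 * (4 * b 5 - 5 * b 6)\<^sup>2
      + 45 * (b 6)\<^sup>2"
    by (simp add: lform_self power2_eq_square algebra_simps)
  then have "45 * (b 6)\<^sup>2 \<le> 120" using assms by (smt (verit) zero_le_power2)
  then show "\<bar>b 6\<bar> \<le> 1" by (intro abs_le_of_square_less) auto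
qed

definition E6_pos_root_list :: "int list list" where
  "E6_pos_root_list =
    [[1,0,0,0,0,0], [0,1,0,0,0,0], [0,0,1,0,0,0], [0,0,0,1,0,0], [0,0,0,0,1,0], [0,0,0,0,0,1],
     [1,0,1,0,0,0], [0,0,1,1,0,0], [0,1,0,1,0,0], [0,0,0,1,1,0], [0,0,0,0,1,1],
     [1,0,1,1,0,0], [0,1,1,1,0,0], [0,0,1,1,1,0], [0,1,0,1,1,0], [0,0,0,1,1,1],
     [1,1,1,1,0,0], [1,0,1,1,1,0], [0,1,1,1,1,0], [0,0,1,1,1,1], [0,1,0,1,1,1],
     [1,1,1,1,1,0], [1,0,1,1,1,1], [0,1,1,2,1,0], [0,1,1,1,1,1],
     [1,1,1,2,1,0], [1,1,1,1,1,1], [0,1,1,2,1,1],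
     [1,1,2,2,1,0], [1,1,1,2,1,1], [0,1,1,2,2,1],
     [1,1,2,2,1,1], [1,1,1,2,2,1], [1,1,2,2,2,1], [1,1,2,3,2,1], [1,2,2,3,2,1]]"

lemma E6_pos_root_coeffs:
  assumes "b \<in> E6_pos_roots"
  shows "[b 1, b 2, b 3, b 4, b 5, b 6] \<in> set E6_pos_root_list"
proof -
  have root: "lform b b = 2" and nonneg: "\<And>i. 0 \<le> b i"
    using assms unfolding E6_pos_roots_def E6_roots_def by auto
  have "b 1 \<in> {0..1}" "b 2 \<in> {0..2}" "b 3 \<in> {0..2}" "b 4 \<in> {0..3}"
      "b 5 \<in> {0..2}" "b 6 \<in> {0..1}"
    using nonneg E6_root_coeff_bounds[OF root] by (auto simp: abs_le_iff)
  moreover have "{0..1::int} = {0, 1}" "{0..2::int} = {0, 1, 2}" "{0..3::int} = {0, 1, 2, 3}"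
    by auto
  ultimately have "b 1 \<in> {0, 1}" "b 2 \<in> {0, 1, 2}" "b 3 \<in> {0, 1, 2}" "b 4 \<in> {0, 1, 2, 3}"
      "b 5 \<in> {0, 1, 2}" "b 6 \<in> {0, 1}"
    by simp_all
  then show ?thesis using root unfolding lform_self
    by (simp only: insert_iff empty_iff simp_thms) (elim disjE; simp add: E6_pos_root_list_def)
qed

lemma E6_root_nonzero:
  assumes "lform b b = 2"
  shows "\<exists>i\<in>{1..6}. b i \<noteq> 0"
proof (rule ccontr)
  assume "\<not> (\<exists>i\<in>{1..6}. b i \<noteq> 0)"
  then have "b 1 = 0" "b 2 = 0" "b 3 = 0" "b 4 = 0" "b 5 = 0" "b 6 = 0" by auto
  then show False using assms by (simp add: lform_self)
qed

lemma mroot_eq: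
  assumes "\<exists>i\<in>{1..6}. b i \<noteq> 0"
  shows "mroot b = (if b 6 \<noteq> 0 then 6 else if b 5 \<noteq> 0 then 5 else if b 4 \<noteq> 0 then 4
    else if b 3 \<noteq> 0 then 3 else if b 2 \<noteq> 0 then 2 else 1)"
proof -
  have "{1..6::nat} = {1, 2, 3, 4, 5, 6}" by auto
  then show ?thesis using assms unfolding mroot_def by (auto intro!: Max_eqI)
qed

lemma fhom_eq:
  "fhom b = [(b 1 + b 6) mod 3, (2 * b 1 + b 3 + b 6) mod 3, (2 * b 3 + b 4 + b 6) mod 3,
    (b 2 + 2 * b 4 + b 5 + b 6) mod 3, (2 * b 2 + b 5 + b 6) mod 3]"
proof -
  have "{1..6::nat} = {1, 2, 3, 4, 5, 6}" by auto
  then show ?thesis by (simp add: fhom_def fimg_def upt_rec algebra_simps)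
qed

definition Gamma_list :: "nat \<Rightarrow> int list list" where
  "Gamma_list s =
    (if s = 3 then [[0,1,2,0,0], [0,0,0,1,2], [1,0,2,0,0]]
     else if s = 4 then [[0,0,1,2,0], [0,1,0,2,0], [0,0,1,0,2], [0,1,0,0,2], [1,0,0,2,0], [1,0,0,0,2]]
     else if s = 5 then [[0,0,0,1,1], [0,0,1,0,1], [0,1,0,0,1], [0,0,1,1,0], [0,1,0,1,0],
       [0,1,1,0,0], [1,0,0,0,1], [1,0,0,1,0], [1,0,1,0,0], [1,1,0,0,0]]
     else if s = 6 then [[1,1,1,1,1], [1,1,1,2,2], [1,1,2,1,2], [1,2,1,1,2], [1,1,2,2,1],
       [1,2,1,2,1], [1,2,2,1,1], [1,2,2,2,2], [2,1,1,1,2], [2,1,1,2,1], [2,1,2,1,1],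
       [2,1,2,2,2], [2,2,1,1,1], [2,2,1,2,2], [2,2,2,1,2], [2,2,2,2,1]]
     else [])"

lemma Gamma_s_subset:
  assumes "s \<in> {3, 4, 5, 6}"
  shows "Gamma_s s \<subseteq> set (Gamma_list s)"
proof
  fix x assume "x \<in> Gamma_s s"
  then obtain b where "b \<in> Delta_s s" and x: "x = fhom b" unfolding Gamma_s_def by blast
  then have pos: "b \<in> E6_pos_roots" and level: "if s = 3 then mroot b \<in> {2, 3} else mroot b = s"
    using assms by (auto simp: Delta_s_def)
  have "lform b b = 2" using pos by (simp add: E6_pos_roots_def E6_roots_def)
  note m = mroot_eq[OF E6_root_nonzero[OF this]]
  from E6_pos_root_coeffs[OF pos] show "x \<in> set (Gamma_list s)"
    using assms level unfolding x fhom_eq m E6_pos_root_list_def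
    by (simp only: set_simps insert_iff empty_iff list.inject simp_thms)
      (elim disjE conjE; auto simp: Gamma_list_def)
qed

lemma card_filter_upt: "card {k \<in> {0..<n}. P k} = length (filter P [0..<n])"
  by (simp add: length_filter_conv_card cong: conj_cong)


lemma Gamma_list_orthogonal_iff_one_agreement:
  assumes "s \<in> {3, 4, 5, 6}" and "x \<in> set (Gamma_list s)" and "y \<in> set (Gamma_list s)"
    and "x \<noteq> y"
  shows "vform x y = 0 \<longleftrightarrow> card {k \<in> {0..<5}. x ! k = y ! k} = 1"
proof -
  from assms(1) have "\<forall>x \<in> set (Gamma_list s). \<forall>y \<in> set (Gamma_list s). x \<noteq> y \<longrightarrow>
      (vform x y = 0 \<longleftrightarrow> length (filter (\<lambda>k. x ! k = y ! k) [0..<5]) = 1)"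
    by (elim insertE emptyE) (simp_all add: Gamma_list_def vform_def upt_rec numeral_eq_Suc)
  with assms(2-4) show ?thesis unfolding card_filter_upt by blast
qed

theorem mainTheorem16:
  fixes s :: nat and x y :: "int list"
  assumes "s \<in> {1,3,4,5,6}"
    and "x \<in> Gamma_s s" and "y \<in> Gamma_s s" and "x \<noteq> y"
  shows "vform x y = 0 \<longleftrightarrow> card {k \<in> {0..<5}. x ! k = y ! k} = 1"
proof (cases "s = 1")
  case True
  then have "Gamma_s s = {fhom (alpha 1)}" by (simp add: Gamma_s_def Delta_s_def)
  with assms(2-4) show ?thesis by simp
next
  case False
  with assms(1) have s: "s \<in> {3, 4, 5, 6}" by simp
  with assms(2-4) show ?thesis
    using Gamma_s_subset[OF s] Gamma_list_orthogonal_iff_one_agreement[OF s] by blast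
qed

end
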